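(* In the setting of the context, $S^2=(q|_B)^{-1}$.
   Context: $k$ is a field; $C_R(S)=\{r\in R:rs=sr\ \forall s\in S\}$. $N\subseteq M$ is a strongly separable, irreducible extension of $k$-algebras: $C_M(N)=k1$ and there are an $N$-bimodule map $E:M\to N$ and $x_1,\dots,x_n,y_1,\dots,y_n\in M$ with $\sum_iE(mx_i)y_i=m=\sum_ix_iE(y_im)$ for all $m\in M$, $E(1)\neq0$, $\sum_ix_iy_i\neq0$; normalized so that $E(1)=1$, whence $\sum_ix_iy_i=\lambda^{-1}1$ with $0\neq\lambda\in k$. Basic construction: given $S\subseteq R$, an $S$-bimodule map $E_S:R\to S$ with $E_S(1)=1$ and $r_i,s_i\in R$ with $\sum_iE_S(rr_i)s_i=r=\sum_ir_iE_S(s_ir)$ and $\sum_ir_is_i=\lambda^{-1}1$, set $R_1=R\otimes_SR$ with product $(a\otimes b)(c\otimes d)=aE_S(bc)\otimes d$, unit $\sum_ir_i\otimes s_i$, $R\subseteq R_1$ via $r\mapsto\sum_irr_i\otimes s_i$, Jones idempotent $e=1\otimes1$, $E_R:R_1\to R$, $a\otimes b\mapsto\lambda ab$; then $E_R$, $\lambda^{-1}r_i\otimes1$, $1\otimes s_i$ satisfy the same conditions with the same $\lambda$. From $(N\subseteq M,E)$ get $M_1,e_1,E_M$; from $(M\subseteq M_1,E_M)$ get $M_2,e_2,E_{M_1}$. Let $A=C_{M_1}(N)$, $B=C_{M_2}(M)$, $C=C_{M_2}(N)$. Depth 2 is assumed: $M_1$ is free as right $M$-module with basis in $A$, $M_2$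 free as right $M_1$-module with basis in $B$. Let $F=E_M\circ E_{M_1}$; on $C$ it takes values in $k1\cong k$ and is faithful. $q:C\to C$ is the Nakayama automorphism of $F$: $F(q(c)c')=F(c'c)$ for all $c,c'\in C$; it maps $B$ onto $B$. The antipode $S:B\to B$ is the linear map defined by $E_{M_1}(be_1e_2)=E_{M_1}(e_2e_1S(b))$ for all $b\in B$ (well defined since $b\mapsto E_{M_1}(e_2e_1b)$ is a linear bijection $B\to A$). *)

theory Defs
  imports Complex_Main
begin

text \<open>All algebras of the tower N \<subseteq> M \<subseteq> M1 \<subseteq> M2 are realised as k-subalgebras
  of one ambient k-algebra (a ring with a k-scalar multiplication sc).\<close>

definition kalg :: "('k::field \<Rightarrow> 'a::ring_1 \<Rightarrow> 'a) \<Rightarrow> bool" where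
  "kalg sc \<longleftrightarrow> vector_space sc \<and>
     (\<forall>c x y. sc c (x * y) = sc c x * y \<and> sc c (x * y) = x * sc c y)"

definition subalg :: "('k::field \<Rightarrow> 'a::ring_1 \<Rightarrow> 'a) \<Rightarrow> 'a set \<Rightarrow> bool" where
  "subalg sc A \<longleftrightarrow> 1 \<in> A \<and> (\<forall>x\<in>A. \<forall>y\<in>A. x + y \<in> A \<and> x * y \<in> A)
     \<and> (\<forall>c. \<forall>x\<in>A. sc c x \<in> A)"

definition centralizer :: "'a::ring_1 set \<Rightarrow> 'a set \<Rightarrow> 'a set" where
  "centralizer R S = {r \<in> R. \<forall>s\<in>S. r * s = s * r}"

definition klinear_on :: "('k::field \<Rightarrow> 'a::ring_1 \<Rightarrow> 'a) \<Rightarrow> 'a set \<Rightarrow> ('a \<Rightarrow> 'a) \<Rightarrow> bool" where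
  "klinear_on sc A f \<longleftrightarrow> (\<forall>x\<in>A. \<forall>y\<in>A. f (x + y) = f x + f y) \<and>
     (\<forall>c. \<forall>x\<in>A. f (sc c x) = sc c (f x))"

definition bimod_map :: "('k::field \<Rightarrow> 'a::ring_1 \<Rightarrow> 'a) \<Rightarrow> 'a set \<Rightarrow> 'a set \<Rightarrow> ('a \<Rightarrow> 'a) \<Rightarrow> bool" where
  "bimod_map sc S R E \<longleftrightarrow> klinear_on sc R E \<and> (\<forall>r\<in>R. E r \<in> S) \<and>
     (\<forall>s\<in>S. \<forall>r\<in>R. E (s * r) = s * E r \<and> E (r * s) = E r * s)"

definition strongly_sep_data ::
  "('k::field \<Rightarrow> 'a::ring_1 \<Rightarrow> 'a) \<Rightarrow> 'a set \<Rightarrow> 'a set \<Rightarrow> ('a \<Rightarrow> 'a) \<Rightarrow> 'k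
    \<Rightarrow> nat \<Rightarrow> (nat \<Rightarrow> 'a) \<Rightarrow> (nat \<Rightarrow> 'a) \<Rightarrow> bool" where
  "strongly_sep_data sc S R E lam n x y \<longleftrightarrow>
     bimod_map sc S R E \<and> E 1 = 1 \<and> (\<forall>i<n. x i \<in> R \<and> y i \<in> R) \<and>
     (\<forall>m\<in>R. (\<Sum>i<n. E (m * x i) * y i) = m \<and> (\<Sum>i<n. x i * E (y i * m)) = m) \<and>
     lam \<noteq> 0 \<and> (\<Sum>i<n. x i * y i) = sc (inverse lam) 1"

text \<open>R1 (a subalgebra of the ambient algebra containing R), the Jones idempotent e and
  E_R : R1 \<rightarrow> R realise the basic construction R \<otimes>_S R of (S \<subseteq> R, E_S):
  the map a \<otimes> b \<mapsto> a e b is a well defined (s e = e s), multiplicative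
  (e r e = E_S(r) e), surjective (R1 is spanned by R e R) algebra map, and
  E_R(a e b) = lam a b (which forces injectivity).\<close>
definition basic_construction ::
  "('k::field \<Rightarrow> 'a::ring_1 \<Rightarrow> 'a) \<Rightarrow> 'a set \<Rightarrow> 'a set \<Rightarrow> ('a \<Rightarrow> 'a) \<Rightarrow> 'k
    \<Rightarrow> 'a set \<Rightarrow> 'a \<Rightarrow> ('a \<Rightarrow> 'a) \<Rightarrow> bool" where
  "basic_construction sc S R ES lam R1 e ER \<longleftrightarrow>
     subalg sc R1 \<and> R \<subseteq> R1 \<and> e \<in> R1 \<and>
     (\<forall>s\<in>S. s * e = e * s) \<and>
     (\<forall>r\<in>R. e * r * e = ES r * e) \<and>
     (\<forall>z\<in>R1. \<exists>(m::nat) a b. (\<forall>i<m. a i \<in> R \<and> b i \<in> R) \<and> z = (\<Sum>i<m. a i * e * b i)) \<and>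
     klinear_on sc R1 ER \<and>
     (\<forall>a\<in>R. \<forall>b\<in>R. ER (a * e * b) = sc lam (a * b))"

definition free_right_with_basis_in :: "'a::ring_1 set \<Rightarrow> 'a set \<Rightarrow> 'a set \<Rightarrow> bool" where
  "free_right_with_basis_in R Sub Bs \<longleftrightarrow>
     (\<exists>(m::nat) b. (\<forall>j<m. b j \<in> Bs) \<and>
        (\<forall>z\<in>R. \<exists>!c. (\<forall>j<m. c j \<in> Sub) \<and> (\<forall>j. m \<le> j \<longrightarrow> c j = 0) \<and>
                      z = (\<Sum>j<m. b j * c j)))"

end

theory Submission
  imports Defs
begin

text \<open>Write F = EM \<circ> EM1. Applying the defining relation of the antipode twice, together
  with the trace-like identity F (e1 z e1 e2) = F (e2 e1 z e1), gives F (c S(S b)) = F (b c) for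
  b \<in> B and c \<in> M2. As F (q(S(S b)) c) = F (c S(S b)) and F is faithful on C, q(S(S b)) = b.
  Finally S maps B onto B: b \<mapsto> EM1 (e2 e1 b) is injective on B by the quasi-basis of
  M1 \<subseteq> M2, and each of its values a \<in> A is also EM1 (b e1 e2) for the rescaled Casimir
  element b = (\<Sum>j. x j a e2 e1 y j) / \<lambda>^2. Hence S \<circ> S is a bijection of B and q is its
  inverse.\<close>

lemma centralizer_subset: "c \<in> centralizer R T \<Longrightarrow> c \<in> R"
  unfolding centralizer_def by blast

lemma centralizer_commute: "c \<in> centralizer R T \<Longrightarrow> t \<in> T \<Longrightarrow> c * t = t * c"
  unfolding centralizer_def by blast

lemma centralizer_antimono: "T \<subseteq> T' \<Longrightarrow> centralizer R T' \<subseteq> centralizer R T"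
  unfolding centralizer_def by blast

locale kalgebra =
  fixes sc :: "'k::field \<Rightarrow> 'a::ring_1 \<Rightarrow> 'a"
  assumes kalg: "kalg sc"
begin

sublocale vs: vector_space sc
  using kalg unfolding kalg_def by blast

lemma scale_mult_left [simp]: "sc c u * v = sc c (u * v)"
  using kalg unfolding kalg_def by metis

lemma scale_mult_right [simp]: "u * sc c v = sc c (u * v)"
  using kalg unfolding kalg_def by metis

context
  fixes A :: "'a set"
  assumes sub: "subalg sc A"
begin

lemma subalg_one: "1 \<in> A"
  and subalg_add: "u \<in> A \<Longrightarrow> v \<in> A \<Longrightarrow> u + v \<in> A"
  and subalg_mult: "u \<in> A \<Longrightarrow> v \<in> A \<Longrightarrow> u * v \<in> A"
  and subalg_scale: "u \<in> A \<Longrightarrow> sc c u \<in> A"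
  using sub unfolding subalg_def by auto

lemma subalg_zero: "0 \<in> A"
  using subalg_scale[OF subalg_one, of 0] by simp

lemma subalg_diff: "u \<in> A \<Longrightarrow> v \<in> A \<Longrightarrow> u - v \<in> A"
  using subalg_add[of u "sc (-1) v"] subalg_scale[of v "-1"] by (simp add: vs.scale_minus_left)

lemma centralizer_diff:
  "u \<in> centralizer A T \<Longrightarrow> v \<in> centralizer A T \<Longrightarrow> u - v \<in> centralizer A T"
  unfolding centralizer_def by (auto simp: subalg_diff algebra_simps)

lemma centralizer_scale: "u \<in> centralizer A T \<Longrightarrow> sc c u \<in> centralizer A T"
  unfolding centralizer_def by (auto simp: subalg_scale)

lemma subalg_sum: "(\<And>i. i < k \<Longrightarrow> f i \<in> A) \<Longrightarrow> (\<Sum>i<(k::nat). f i) \<in> A"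
  by (induction k) (simp_all add: subalg_zero subalg_add)

end

end

locale jones_basic_construction = kalgebra sc
  for sc :: "'k::field \<Rightarrow> 'a::ring_1 \<Rightarrow> 'a" +
  fixes S R :: "'a set" and ES :: "'a \<Rightarrow> 'a" and lam :: 'k
    and R1 :: "'a set" and e :: 'a and ER :: "'a \<Rightarrow> 'a"
  assumes subalg_R: "subalg sc R" and S_subset_R: "S \<subseteq> R"
    and ES_range: "r \<in> R \<Longrightarrow> ES r \<in> S"
    and bc: "basic_construction sc S R ES lam R1 e ER"
begin

lemma subalg_R1: "subalg sc R1"
  and R_subset_R1: "R \<subseteq> R1"
  and e_in_R1: "e \<in> R1"
  and e_commute: "s \<in> S \<Longrightarrow> s * e = e * s"
  and e_absorb: "r \<in> R \<Longrightarrow> e * r * e = ES r * e"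
  and R1_spanned: "z \<in> R1 \<Longrightarrow>
        \<exists>(m::nat) a b. (\<forall>i<m. a i \<in> R \<and> b i \<in> R) \<and> z = (\<Sum>i<m. a i * e * b i)"
  and ER_add: "u \<in> R1 \<Longrightarrow> v \<in> R1 \<Longrightarrow> ER (u + v) = ER u + ER v"
  and ER_scale: "u \<in> R1 \<Longrightarrow> ER (sc c u) = sc c (ER u)"
  and ER_generator: "a \<in> R \<Longrightarrow> b \<in> R \<Longrightarrow> ER (a * e * b) = sc lam (a * b)"
  using bc unfolding basic_construction_def klinear_on_def by auto

lemma generator_in_R1: "a \<in> R \<Longrightarrow> b \<in> R \<Longrightarrow> a * e * b \<in> R1"
  using R_subset_R1 e_in_R1 subalg_mult[OF subalg_R1] by blast

lemma R1_induct [consumes 1, case_names zero generator add]: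
  assumes z: "z \<in> R1" and P_zero: "P 0"
    and P_generator: "\<And>a b. a \<in> R \<Longrightarrow> b \<in> R \<Longrightarrow> P (a * e * b)"
    and P_add: "\<And>u v. u \<in> R1 \<Longrightarrow> v \<in> R1 \<Longrightarrow> P u \<Longrightarrow> P v \<Longrightarrow> P (u + v)"
  shows "P z"
proof -
  obtain m :: nat and a b where ab: "\<forall>i<m. a i \<in> R \<and> b i \<in> R"
    and z_eq: "z = (\<Sum>i<m. a i * e * b i)"
    using R1_spanned[OF z] by blast
  have "(\<Sum>i<k. a i * e * b i) \<in> R1 \<and> P (\<Sum>i<k. a i * e * b i)" if "k \<le> m" for k
    using that
  proof (induction k)
    case (Suc k)
    then show ?case
      using ab P_generator P_add generator_in_R1 subalg_add[OF subalg_R1] by simp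
  qed (simp add: P_zero subalg_zero[OF subalg_R1])
  then show ?thesis
    using z_eq by blast
qed

lemma ER_zero [simp]: "ER 0 = 0"
  using ER_add[of 0 0] subalg_zero[OF subalg_R1] by simp

lemma ER_range: "z \<in> R1 \<Longrightarrow> ER z \<in> R"
  by (induction z rule: R1_induct)
     (simp_all add: ER_generator ER_add subalg_zero subalg_R subalg_mult subalg_scale subalg_add)

lemma ER_mult_left:
  assumes m: "m \<in> R" and z: "z \<in> R1"
  shows "ER (m * z) = m * ER z"
  using z
proof (induction z rule: R1_induct)
  case (generator a b)
  then show ?case
    using m ER_generator subalg_mult[OF subalg_R] by (simp add: mult.assoc [symmetric])
next
  case (add u v)
  then show ?case
    using m R_subset_R1 subalg_mult[OF subalg_R1] by (simp add: distrib_left ER_add subset_iff)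
qed simp

lemma ER_mult_right:
  assumes m: "m \<in> R" and z: "z \<in> R1"
  shows "ER (z * m) = ER z * m"
  using z
proof (induction z rule: R1_induct)
  case (generator a b)
  then show ?case
    using m ER_generator ER_generator[of a "b * m"] subalg_mult[OF subalg_R]
    by (simp add: mult.assoc [symmetric])
next
  case (add u v)
  then show ?case
    using m R_subset_R1 subalg_mult[OF subalg_R1] by (simp add: distrib_right ER_add subset_iff)
qed simp

lemma ER_e: "ER e = sc lam 1"
  using ER_generator[of 1 1] subalg_one[OF subalg_R] by simp

text \<open>a j * e and e * b j are the elements a j \<otimes> 1 and 1 \<otimes> b j of R \<otimes> R over S.\<close>

lemma quasi_basis_lift:
  assumes ab: "\<And>j. j < k \<Longrightarrow> a j \<in> R \<and> b j \<in> R"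
    and quasi_basis: "\<And>u. u \<in> R \<Longrightarrow> (\<Sum>j<k. a j * ES (b j * u)) = sc \<mu> u"
    and z: "z \<in> R1"
  shows "(\<Sum>j<k. a j * e * ER (e * b j * z)) = sc lam (sc \<mu> z)"
  using z
proof (induction z rule: R1_induct)
  case (generator p r)
  have "a j * e * ER (e * b j * (p * e * r)) = sc lam (a j * ES (b j * p) * e * r)"
    if j: "j < k" for j
  proof -
    have bp: "b j * p \<in> R"
      using ab[OF j] generator subalg_mult[OF subalg_R] by blast
    then have ES_bp: "ES (b j * p) \<in> S"
      by (rule ES_range)
    have "e * b j * (p * e * r) = (e * (b j * p) * e) * r"
      by (simp add: mult.assoc)
    also have "\<dots> = ES (b j * p) * e * r"
      using e_absorb[OF bp] by simp
    finally have "ER (e * b j * (p * e * r)) = sc lam (ES (b j * p) * r)"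
      using ER_generator ES_bp S_subset_R generator by auto
    then show ?thesis
      using e_commute[OF ES_bp] by (simp add: mult.assoc)
  qed
  then have "(\<Sum>j<k. a j * e * ER (e * b j * (p * e * r)))
      = sc lam ((\<Sum>j<k. a j * ES (b j * p)) * e * r)"
    by (simp add: vs.scale_sum_right sum_distrib_right)
  then show ?case
    using quasi_basis[OF generator(1)] by simp
next
  case (add u v)
  have "e * b j * w \<in> R1" if "j < k" "w \<in> R1" for j w
    using that ab e_in_R1 R_subset_R1 subalg_mult[OF subalg_R1] by blast
  then have "(\<Sum>j<k. a j * e * ER (e * b j * (u + v)))
      = (\<Sum>j<k. a j * e * ER (e * b j * u)) + (\<Sum>j<k. a j * e * ER (e * b j * v))"
    using add.hyps by (simp add: distrib_left ER_add sum.distrib)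
  then show ?case
    using add.IH by (simp add: vs.scale_right_distrib)
qed simp

end

lemma casimir_commute:
  assumes sep: "strongly_sep_data sc S R E lam n x y" and sub: "subalg sc R"
    and w: "\<forall>s\<in>S. s * w = w * s" and m: "m \<in> R"
  shows "m * (\<Sum>j<n. x j * w * y j) = (\<Sum>j<n. x j * w * y j) * m"
proof -
  have xy: "x j \<in> R" "y j \<in> R" if "j < n" for j
    using sep that unfolding strongly_sep_data_def by auto
  have E_range: "E r \<in> S" if "r \<in> R" for r
    using sep that unfolding strongly_sep_data_def bimod_map_def by blast
  have R_mult: "u * v \<in> R" if "u \<in> R" "v \<in> R" for u v
    using sub that unfolding subalg_def by blast
  have qb1: "(\<Sum>j<n. E (r * x j) * y j) = r" and qb2: "(\<Sum>i<n. x i * E (y i * r)) = r"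
    if "r \<in> R" for r
    using sep that unfolding strongly_sep_data_def by auto
  have "m * (\<Sum>j<n. x j * w * y j) = (\<Sum>j<n. (\<Sum>i<n. x i * E (y i * (m * x j))) * w * y j)"
    using qb2 xy m R_mult by (simp add: sum_distrib_left mult.assoc)
  also have "\<dots> = (\<Sum>j<n. \<Sum>i<n. x i * E (y i * (m * x j)) * w * y j)"
    by (simp add: sum_distrib_right)
  also have "\<dots> = (\<Sum>j<n. \<Sum>i<n. x i * w * (E (y i * m * x j) * y j))"
  proof (intro sum.cong refl)
    fix i j assume "j \<in> {..<n}" "i \<in> {..<n}"
    then have "E (y i * (m * x j)) \<in> S"
      using xy m R_mult E_range by simp
    then have "E (y i * (m * x j)) * w = w * E (y i * (m * x j))"
      using w by blast
    then show "x i * E (y i * (m * x j)) * w * y j = x i * w * (E (y i * m * x j) * y j)"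
      by (simp add: mult.assoc)
  qed
  also have "\<dots> = (\<Sum>i<n. x i * w * (\<Sum>j<n. E (y i * m * x j) * y j))"
    by (subst sum.swap) (simp add: sum_distrib_left)
  also have "\<dots> = (\<Sum>i<n. x i * w * (y i * m))"
    using qb1 xy m R_mult by simp
  also have "\<dots> = (\<Sum>j<n. x j * w * y j) * m"
    by (simp add: sum_distrib_right mult.assoc)
  finally show ?thesis .
qed

lemma bij_betw_of_right_inverse_onto:
  assumes onto: "g ` B = B" and inverse: "\<And>b. b \<in> B \<Longrightarrow> q (g b) = b"
  shows "bij_betw q B B \<and> (\<forall>b\<in>B. g b = the_inv_into B q b)"
proof -
  have q_g_onto: "b = g (q b) \<and> q b \<in> B" if "b \<in> B" for b
  proof -
    from that onto have "b \<in> g ` B"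
      by simp
    then obtain d where "d \<in> B" "b = g d"
      by blast
    then show ?thesis
      using inverse by simp
  qed
  have bij: "bij_betw q B B"
  proof (rule bij_betw_byWitness[where f' = g])
    show "\<forall>b\<in>B. g (q b) = b" "q ` B \<subseteq> B"
      using q_g_onto by auto
    show "\<forall>b\<in>B. q (g b) = b" "g ` B \<subseteq> B"
      using inverse onto by auto
  qed
  have "g b = the_inv_into B q b" if "b \<in> B" for b
  proof -
    have "g b \<in> B"
      using imageI[OF that, of g] onto by simp
    then show ?thesis
      using the_inv_into_f_eq[OF bij_betw_imp_inj_on[OF bij] inverse[OF that]] by simp
  qed
  with bij show ?thesis
    by blast
qed

locale jones_tower = kalgebra sc
  for sc :: "'k::field \<Rightarrow> 'a::ring_1 \<Rightarrow> 'a" +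
  fixes N M M1 M2 :: "'a set" and E EM EM1 :: "'a \<Rightarrow> 'a" and lam :: 'k
    and n :: nat and x y :: "nat \<Rightarrow> 'a" and e1 e2 :: 'a
  assumes subalg_M: "subalg sc M" and N_subset_M: "N \<subseteq> M"
    and sep: "strongly_sep_data sc N M E lam n x y"
    and bc1: "basic_construction sc N M E lam M1 e1 EM"
    and bc2: "basic_construction sc M M1 EM lam M2 e2 EM1"
begin

abbreviation "A \<equiv> centralizer M1 N"
abbreviation "B \<equiv> centralizer M2 M"
abbreviation "C \<equiv> centralizer M2 N"
abbreviation F :: "'a \<Rightarrow> 'a" where "F z \<equiv> EM (EM1 z)"

lemma E_range: "m \<in> M \<Longrightarrow> E m \<in> N"
  and x_in_M: "j < n \<Longrightarrow> x j \<in> M"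
  and y_in_M: "j < n \<Longrightarrow> y j \<in> M"
  and quasi_basis: "m \<in> M \<Longrightarrow> (\<Sum>j<n. x j * E (y j * m)) = m"
  and lam_nonzero: "lam \<noteq> 0"
  using sep unfolding strongly_sep_data_def bimod_map_def by auto

sublocale level1: jones_basic_construction sc N M E lam M1 e1 EM
  by unfold_locales (fact subalg_M N_subset_M bc1 E_range)+

sublocale level2: jones_basic_construction sc M M1 EM lam M2 e2 EM1
  by unfold_locales (fact level1.subalg_R1 level1.R_subset_R1 level1.ER_range bc2)+

lemma tower_membership [simp]:
  "e1 \<in> M1" "e1 \<in> M2" "e2 \<in> M2"
  "u \<in> N \<Longrightarrow> u \<in> M" "u \<in> M \<Longrightarrow> u \<in> M1" "u \<in> M1 \<Longrightarrow> u \<in> M2"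
  "u \<in> M \<Longrightarrow> v \<in> M \<Longrightarrow> u * v \<in> M"
  "u \<in> M1 \<Longrightarrow> v \<in> M1 \<Longrightarrow> u * v \<in> M1"
  "u \<in> M2 \<Longrightarrow> v \<in> M2 \<Longrightarrow> u * v \<in> M2"
  "z \<in> M1 \<Longrightarrow> EM z \<in> M" "z \<in> M2 \<Longrightarrow> EM1 z \<in> M1"
  "j < n \<Longrightarrow> x j \<in> M" "j < n \<Longrightarrow> y j \<in> M"
  using level1.e_in_R1 level2.e_in_R1 level1.R_subset_R1 level2.R_subset_R1 N_subset_M
    subalg_mult[OF subalg_M] subalg_mult[OF level1.subalg_R1] subalg_mult[OF level2.subalg_R1]
    level1.ER_range level2.ER_range x_in_M y_in_M
  by auto

lemma F_add: "u \<in> M2 \<Longrightarrow> v \<in> M2 \<Longrightarrow> F (u + v) = F u + F v"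
  by (simp add: level1.ER_add level2.ER_add)

lemma F_diff: "u \<in> M2 \<Longrightarrow> v \<in> M2 \<Longrightarrow> F (u - v) = F u - F v"
  using F_add[of "u - v" v] subalg_diff[OF level2.subalg_R1] by (simp add: eq_diff_eq)

lemma F_mult_left: "m \<in> M \<Longrightarrow> z \<in> M2 \<Longrightarrow> F (m * z) = m * F z"
  by (simp add: level1.ER_mult_left level2.ER_mult_left)

lemma F_mult_right: "m \<in> M \<Longrightarrow> z \<in> M2 \<Longrightarrow> F (z * m) = F z * m"
  by (simp add: level1.ER_mult_right level2.ER_mult_right)

lemma e2_e1_e2: "e2 * e1 * e2 = sc lam e2"
  using level2.e_absorb[of e1] level1.ER_e by simp

text \<open>Since u e2 (s e1 t) = (u s) e2 e1 t, the elements w e2 e1 t already span M2.\<close>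

lemma M2_induct [consumes 1, case_names zero generator add]:
  assumes z: "z \<in> M2" and P_zero: "P 0"
    and P_generator: "\<And>w t. w \<in> M1 \<Longrightarrow> t \<in> M \<Longrightarrow> P (w * e2 * e1 * t)"
    and P_add: "\<And>u v. u \<in> M2 \<Longrightarrow> v \<in> M2 \<Longrightarrow> P u \<Longrightarrow> P v \<Longrightarrow> P (u + v)"
  shows "P z"
  using z
proof (induction z rule: level2.R1_induct)
  case (generator u v)
  show ?case
    using \<open>v \<in> M1\<close>
  proof (induction v rule: level1.R1_induct)
    case (generator s t)
    have "u * e2 * (s * e1 * t) = (u * s) * e2 * e1 * t"
      using level2.e_commute[OF \<open>s \<in> M\<close>] by (simp add: mult.assoc)
    then show ?case
      using generator \<open>u \<in> M1\<close> P_generator by simp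
  next
    case (add v1 v2)
    then show ?case
      using \<open>u \<in> M1\<close> P_add[of "u * e2 * v1" "u * e2 * v2"] by (simp add: distrib_left)
  qed (simp add: P_zero)
qed (use P_zero P_add in auto)

lemma F_trace:
  assumes z: "z \<in> M2"
  shows "F (e1 * z * e1 * e2) = F (e2 * e1 * z * e1)"
  using z
proof (induction z rule: level2.R1_induct)
  case (generator a b)
  have b_e1: "b * e1 \<in> M1" and e1_a: "e1 * a \<in> M1"
    using generator by simp_all
  have "e1 * (a * e2 * b) * e1 * e2 = (e1 * a) * (e2 * (b * e1) * e2)"
    by (simp add: mult.assoc)
  also have "\<dots> = (e1 * a * EM (b * e1)) * e2 * 1"
    using level2.e_absorb[OF b_e1] by (simp add: mult.assoc)
  finally have "F (e1 * (a * e2 * b) * e1 * e2) = EM (sc lam (e1 * a * EM (b * e1)))"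
    using level2.ER_generator[of "e1 * a * EM (b * e1)" 1] b_e1 e1_a subalg_one[OF level1.subalg_R1]
    by simp
  also have "\<dots> = sc lam (EM (e1 * a) * EM (b * e1))"
    using b_e1 e1_a by (simp add: level1.ER_scale level1.ER_mult_right)
  finally have lhs: "F (e1 * (a * e2 * b) * e1 * e2) = sc lam (EM (e1 * a) * EM (b * e1))" .
  have "e2 * e1 * (a * e2 * b) * e1 = (e2 * (e1 * a) * e2) * (b * e1)"
    by (simp add: mult.assoc)
  also have "\<dots> = EM (e1 * a) * e2 * (b * e1)"
    using level2.e_absorb[OF e1_a] by simp
  finally have "F (e2 * e1 * (a * e2 * b) * e1) = EM (sc lam (EM (e1 * a) * (b * e1)))"
    using level2.ER_generator b_e1 e1_a by simp
  also have "\<dots> = sc lam (EM (e1 * a) * EM (b * e1))"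
    using b_e1 e1_a by (simp add: level1.ER_scale level1.ER_mult_left)
  finally show ?case
    using lhs by simp
next
  case (add u v)
  then show ?case
    by (simp add: distrib_left distrib_right F_add)
qed simp

lemma F_antipode_exchange:
  assumes b: "b \<in> B" and b': "b' \<in> B" and antipode: "EM1 (b * e1 * e2) = EM1 (e2 * e1 * b')"
    and w: "w \<in> M1"
  shows "F (w * b' * e1 * e2) = F (b * w * e2 * e1)"
  using w
proof (induction w rule: level1.R1_induct)
  case (generator p r)
  have b_M2: "b \<in> M2" "b' \<in> M2"
    using b b' centralizer_subset by auto
  have "p * e1 * r * b' * e1 * e2 = p * (e1 * (b' * r) * e1 * e2)"
    using centralizer_commute[OF b' \<open>r \<in> M\<close>] by (simp add: mult.assoc)
  then have "F (p * e1 * r * b' * e1 * e2) = p * F (e1 * (b' * r) * e1 * e2)"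
    using generator b_M2 by (simp add: F_mult_left)
  also have "\<dots> = p * F (e2 * e1 * (b' * r) * e1)"
    using generator b_M2 by (simp add: F_trace)
  also have "e2 * e1 * (b' * r) * e1 = (e2 * e1 * b') * (r * e1)"
    by (simp add: mult.assoc)
  also have "EM1 \<dots> = EM1 (e2 * e1 * b') * (r * e1)"
    using generator b_M2 by (simp add: level2.ER_mult_right)
  also have "\<dots> = EM1 (b * e1 * e2 * (r * e1))"
    using antipode generator b_M2 by (simp add: level2.ER_mult_right)
  also have "p * EM (\<dots>) = F (b * (p * e1 * r) * e2 * e1)"
  proof -
    have "b * (p * e1 * r) * e2 * e1 = (b * p) * e1 * (r * e2) * e1"
      by (simp add: mult.assoc)
    also have "\<dots> = p * (b * e1 * e2 * (r * e1))"
      using centralizer_commute[OF b \<open>p \<in> M\<close>] level2.e_commute[OF \<open>r \<in> M\<close>]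
      by (simp add: mult.assoc)
    finally have "b * (p * e1 * r) * e2 * e1 = p * (b * e1 * e2 * (r * e1))" .
    then show ?thesis
      using generator b_M2 by (simp add: F_mult_left)
  qed
  finally show ?case .
next
  case (add u v)
  have "b \<in> M2" "b' \<in> M2"
    using b b' centralizer_subset by auto
  with add show ?case
    by (simp add: distrib_left distrib_right F_add)
qed simp

lemma F_antipode_twice:
  assumes b: "b \<in> B" and b': "b' \<in> B" and b'': "b'' \<in> B"
    and antipode_b: "EM1 (b * e1 * e2) = EM1 (e2 * e1 * b')"
    and antipode_b': "EM1 (b' * e1 * e2) = EM1 (e2 * e1 * b'')"
    and c: "c \<in> M2"
  shows "F (c * b'') = F (b * c)"
proof -
  have b_M2: "b \<in> M2" "b' \<in> M2" "b'' \<in> M2"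
    using b b' b'' centralizer_subset by auto
  have key: "F (w * e2 * e1 * b'') = F (b * w * e2 * e1)" if w: "w \<in> M1" for w
  proof -
    have "EM1 (w * e2 * e1 * b'') = w * EM1 (e2 * e1 * b'')"
      using w b_M2 level2.ER_mult_left[of w "e2 * e1 * b''"] by (simp add: mult.assoc)
    also have "\<dots> = EM1 (w * b' * e1 * e2)"
      using w b_M2 antipode_b' level2.ER_mult_left[of w "b' * e1 * e2"] by (simp add: mult.assoc)
    finally show ?thesis
      using F_antipode_exchange[OF b b' antipode_b w] by simp
  qed
  show ?thesis
    using c
  proof (induction c rule: M2_induct)
    case (generator w t)
    have "w * e2 * e1 * t * b'' = w * e2 * e1 * b'' * t"
      using centralizer_commute[OF b'' \<open>t \<in> M\<close>] by (simp add: mult.assoc)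
    then have "F (w * e2 * e1 * t * b'') = F (b * w * e2 * e1) * t"
      using generator b_M2 key by (simp add: F_mult_right)
    also have "\<dots> = F (b * (w * e2 * e1 * t))"
      using generator b_M2 F_mult_right[of t "b * w * e2 * e1"] by (simp add: mult.assoc)
    finally show ?case .
  next
    case (add u v)
    with b_M2 show ?case
      by (simp add: distrib_left distrib_right F_add)
  qed simp
qed

lemma nakayama_unique:
  assumes faithful: "\<forall>c\<in>C. (\<forall>c'\<in>C. F (c * c') = 0) \<longrightarrow> c = 0"
    and q_C: "\<forall>c\<in>C. q c \<in> C"
    and nakayama: "\<forall>c\<in>C. \<forall>c'\<in>C. F (q c * c') = F (c' * c)"
    and g: "g \<in> C" and b: "b \<in> C" and twist: "\<And>c. c \<in> C \<Longrightarrow> F (c * g) = F (b * c)"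
  shows "q g = b"
proof -
  have "q g - b \<in> C"
    using q_C g b centralizer_diff[OF level2.subalg_R1] by blast
  moreover have "F ((q g - b) * c) = 0" if c: "c \<in> C" for c
  proof -
    have "q g \<in> M2" "b \<in> M2" "c \<in> M2"
      using q_C g b c centralizer_subset by blast+
    then have "F ((q g - b) * c) = F (q g * c) - F (b * c)"
      by (simp add: left_diff_distrib F_diff)
    also have "\<dots> = 0"
      using nakayama g c twist by simp
    finally show ?thesis .
  qed
  ultimately have "q g - b = 0"
    using faithful by blast
  then show ?thesis
    by simp
qed

lemma quasi_basis_M1: "u \<in> M1 \<Longrightarrow> (\<Sum>j<n. x j * e1 * EM (e1 * y j * u)) = sc lam u"
  using level1.quasi_basis_lift[of n x y 1 u] quasi_basis by simp

lemma quasi_basis_M2: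
  "z \<in> M2 \<Longrightarrow> (\<Sum>j<n. x j * e1 * e2 * EM1 (e2 * (e1 * y j) * z)) = sc lam (sc lam z)"
  using level2.quasi_basis_lift[of n "\<lambda>j. x j * e1" "\<lambda>j. e1 * y j" lam z] quasi_basis_M1
  by simp

lemma inj_on_EM1_e2_e1: "inj_on (\<lambda>b. EM1 (e2 * e1 * b)) B"
proof (rule inj_onI)
  have expand: "sc lam (sc lam b) = (\<Sum>j<n. x j * e1 * e2 * (EM1 (e2 * e1 * b) * y j))"
    if b: "b \<in> B" for b
  proof -
    have "e2 * (e1 * y j) * b = (e2 * e1 * b) * y j" if "j < n" for j
      using centralizer_commute[OF b y_in_M[OF that]] by (simp add: mult.assoc)
    moreover have "b \<in> M2"
      using b centralizer_subset by blast
    ultimately show ?thesis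
      using quasi_basis_M2[of b] by (simp add: level2.ER_mult_right)
  qed
  fix b1 b2
  assume "b1 \<in> B" "b2 \<in> B" "EM1 (e2 * e1 * b1) = EM1 (e2 * e1 * b2)"
  then have "sc lam (sc lam b1) = sc lam (sc lam b2)"
    using expand by simp
  then show "b1 = b2"
    using lam_nonzero by simp
qed

lemma EM1_e2_e1_in_A:
  assumes b: "b \<in> B"
  shows "EM1 (e2 * e1 * b) \<in> A"
  unfolding centralizer_def
proof (intro CollectI conjI ballI)
  have b_M2: "b \<in> M2"
    using b centralizer_subset by blast
  then show "EM1 (e2 * e1 * b) \<in> M1"
    by simp
  fix s
  assume s: "s \<in> N"
  have "s * (e2 * e1 * b) = (s * e2) * e1 * b"
    by (simp add: mult.assoc)
  also have "\<dots> = e2 * (s * e1) * b"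
    using level2.e_commute[of s] s by (simp add: mult.assoc)
  also have "\<dots> = e2 * e1 * (s * b)"
    using level1.e_commute[OF s] by (simp add: mult.assoc)
  also have "\<dots> = (e2 * e1 * b) * s"
    using centralizer_commute[OF b, of s] s by (simp add: mult.assoc)
  finally have commute: "s * (e2 * e1 * b) = (e2 * e1 * b) * s" .
  have "EM1 (e2 * e1 * b) * s = EM1 (e2 * e1 * b * s)"
    using s b_M2 by (simp add: level2.ER_mult_right)
  also have "\<dots> = s * EM1 (e2 * e1 * b)"
    using s b_M2 by (simp add: commute [symmetric] level2.ER_mult_left)
  finally show "EM1 (e2 * e1 * b) * s = s * EM1 (e2 * e1 * b)" .
qed

lemma casimir_in_B:
  assumes a: "a \<in> A"
  shows "(\<Sum>j<n. x j * (a * e2 * e1) * y j) \<in> B"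
proof -
  have a_M1: "a \<in> M1"
    using a centralizer_subset by blast
  have "\<forall>s\<in>N. s * (a * e2 * e1) = (a * e2 * e1) * s"
  proof
    fix s
    assume s: "s \<in> N"
    have "s * (a * e2 * e1) = a * (s * e2) * e1"
      using centralizer_commute[OF a s] by (simp add: mult.assoc [symmetric])
    also have "\<dots> = (a * e2 * e1) * s"
      using level2.e_commute[of s] level1.e_commute[OF s] s by (simp add: mult.assoc)
    finally show "s * (a * e2 * e1) = (a * e2 * e1) * s" .
  qed
  then have "m * (\<Sum>j<n. x j * (a * e2 * e1) * y j) = (\<Sum>j<n. x j * (a * e2 * e1) * y j) * m"
    if "m \<in> M" for m
    using casimir_commute[OF sep subalg_M _ that] by blast
  moreover have "(\<Sum>j<n. x j * (a * e2 * e1) * y j) \<in> M2"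
    using a_M1 by (simp add: subalg_sum[OF level2.subalg_R1])
  ultimately show ?thesis
    unfolding centralizer_def by auto
qed

lemma EM1_casimir:
  assumes a: "a \<in> A"
  shows "EM1 ((\<Sum>j<n. x j * (a * e2 * e1) * y j) * e1 * e2) = sc lam (sc lam a)"
proof -
  have a_M1: "a \<in> M1"
    using a centralizer_subset by blast
  have "x j * (a * e2 * e1) * y j * e1 * e2 = sc lam (x j * E (y j) * a * e2)" if j: "j < n" for j
  proof -
    have E_y: "E (y j) \<in> N"
      using E_range y_in_M[OF j] by blast
    have "x j * (a * e2 * e1) * y j * e1 * e2 = x j * a * e2 * (e1 * y j * e1) * e2"
      by (simp add: mult.assoc)
    also have "\<dots> = x j * a * (e2 * E (y j)) * e1 * e2"
      using level1.e_absorb[OF y_in_M[OF j]] by (simp add: mult.assoc)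
    also have "\<dots> = x j * (a * E (y j)) * (e2 * e1 * e2)"
      using level2.e_commute[of "E (y j)", symmetric] E_y by (simp add: mult.assoc)
    also have "\<dots> = sc lam (x j * E (y j) * a * e2)"
      using e2_e1_e2 centralizer_commute[OF a E_y] by (simp add: mult.assoc)
    finally show ?thesis .
  qed
  then have "(\<Sum>j<n. x j * (a * e2 * e1) * y j) * e1 * e2
      = sc lam ((\<Sum>j<n. x j * E (y j)) * a * e2)"
    by (simp add: sum_distrib_right vs.scale_sum_right)
  also have "\<dots> = sc lam (a * e2 * 1)"
    using quasi_basis[of 1] subalg_one[OF subalg_M] by simp
  finally show ?thesis
    using a_M1 level2.ER_generator[of a 1] subalg_one[OF level1.subalg_R1]
    by (simp add: level2.ER_scale)
qed

lemma antipode_preimage_exists: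
  assumes b': "b' \<in> B"
  shows "\<exists>b\<in>B. EM1 (b * e1 * e2) = EM1 (e2 * e1 * b')"
proof -
  define a where "a = EM1 (e2 * e1 * b')"
  define T where "T = (\<Sum>j<n. x j * (a * e2 * e1) * y j)"
  have a: "a \<in> A"
    unfolding a_def using EM1_e2_e1_in_A[OF b'] .
  have T: "T \<in> B"
    unfolding T_def using casimir_in_B[OF a] .
  have "T \<in> M2"
    using T centralizer_subset by blast
  then have "EM1 (sc (inverse (lam * lam)) T * e1 * e2) = sc (inverse (lam * lam)) (EM1 (T * e1 * e2))"
    by (simp add: level2.ER_scale)
  also have "\<dots> = a"
    unfolding T_def using EM1_casimir[OF a] lam_nonzero by (simp add: field_simps)
  finally show ?thesis
    using centralizer_scale[OF level2.subalg_R1 T] unfolding a_def by blast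
qed

lemma antipode_onto:
  assumes S_B: "\<forall>b\<in>B. S b \<in> B"
    and antipode: "\<forall>b\<in>B. EM1 (b * e1 * e2) = EM1 (e2 * e1 * S b)"
  shows "S ` B = B"
proof
  show "S ` B \<subseteq> B"
    using S_B by blast
  show "B \<subseteq> S ` B"
  proof
    fix b'
    assume b': "b' \<in> B"
    then obtain b where b: "b \<in> B" and "EM1 (b * e1 * e2) = EM1 (e2 * e1 * b')"
      using antipode_preimage_exists by blast
    then have "S b = b'"
      using inj_onD[OF inj_on_EM1_e2_e1] antipode S_B b' by simp
    with b show "b' \<in> S ` B"
      by blast
  qed
qed

lemma nakayama_antipode_twice:
  assumes faithful: "\<forall>c\<in>C. (\<forall>c'\<in>C. F (c * c') = 0) \<longrightarrow> c = 0"
    and q_C: "\<forall>c\<in>C. q c \<in> C"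
    and nakayama: "\<forall>c\<in>C. \<forall>c'\<in>C. F (q c * c') = F (c' * c)"
    and S_B: "\<forall>b\<in>B. S b \<in> B"
    and antipode: "\<forall>b\<in>B. EM1 (b * e1 * e2) = EM1 (e2 * e1 * S b)"
    and b: "b \<in> B"
  shows "q (S (S b)) = b"
proof (rule nakayama_unique[OF faithful q_C nakayama])
  have S_b: "S b \<in> B" "S (S b) \<in> B"
    using S_B b by blast+
  then show "S (S b) \<in> C" "b \<in> C"
    using b centralizer_antimono[OF N_subset_M] by blast+
  show "F (c * S (S b)) = F (b * c)" if "c \<in> C" for c
  proof (rule F_antipode_twice[OF b S_b])
    show "EM1 (b * e1 * e2) = EM1 (e2 * e1 * S b)" "EM1 (S b * e1 * e2) = EM1 (e2 * e1 * S (S b))"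
      using antipode b S_b by simp_all
    show "c \<in> M2"
      using that centralizer_subset by blast
  qed
qed

end

theorem proposition4p10:
  fixes sc :: "'k::field \<Rightarrow> 'a::ring_1 \<Rightarrow> 'a"
    and N M M1 M2 :: "'a set"
    and E EM EM1 q S :: "'a \<Rightarrow> 'a"
    and lam :: 'k and n :: nat and x y :: "nat \<Rightarrow> 'a" and e1 e2 :: 'a
  assumes alg: "kalg sc"
    and subN: "subalg sc N" and subM: "subalg sc M" and NM: "N \<subseteq> M"
    and irred: "centralizer M N = range (\<lambda>c. sc c 1)"
    and sep: "strongly_sep_data sc N M E lam n x y"
    and bc1: "basic_construction sc N M E lam M1 e1 EM"
    and bc2: "basic_construction sc M M1 EM lam M2 e2 EM1"
    and d2a: "free_right_with_basis_in M1 M (centralizer M1 N)"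
    and d2b: "free_right_with_basis_in M2 M1 (centralizer M2 M)"
    and Fk: "\<forall>c\<in>centralizer M2 N. EM (EM1 c) \<in> range (\<lambda>t. sc t 1)"
    and Ffaith: "\<forall>c\<in>centralizer M2 N.
                   (\<forall>c'\<in>centralizer M2 N. EM (EM1 (c * c')) = 0) \<longrightarrow> c = 0"
    and qC: "\<forall>c\<in>centralizer M2 N. q c \<in> centralizer M2 N"
    and qnak: "\<forall>c\<in>centralizer M2 N. \<forall>c'\<in>centralizer M2 N.
                 EM (EM1 (q c * c')) = EM (EM1 (c' * c))"
    and SB: "\<forall>b\<in>centralizer M2 M. S b \<in> centralizer M2 M"
    and Sdef: "\<forall>b\<in>centralizer M2 M. EM1 (b * e1 * e2) = EM1 (e2 * e1 * S b)"
  shows "bij_betw q (centralizer M2 M) (centralizer M2 M) \<and>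
         (\<forall>b\<in>centralizer M2 M. S (S b) = the_inv_into (centralizer M2 M) q b)"
proof -
  interpret jones_tower sc N M M1 M2 E EM EM1 lam n x y e1 e2
    by unfold_locales (fact alg subM NM sep bc1 bc2)+
  have "(\<lambda>b. S (S b)) ` B = B"
    using antipode_onto[OF SB Sdef] image_image[of S S B] by simp
  moreover have "q (S (S b)) = b" if "b \<in> B" for b
    using nakayama_antipode_twice[OF Ffaith qC qnak SB Sdef that] .
  ultimately show ?thesis
    by (rule bij_betw_of_right_inverse_onto)
qed

end
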